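(* Let $r$ be a positive integer, let $G$ be a graph on $n$ vertices, and let $\mathcal{G}_0$ be the auxiliary graph of $G$ defined below. Suppose $\mathcal{G}_0$ has average degree $d>0$. Then there exist $D_1,D_2\geq d/4$ and a non-empty bipartite subgraph $\mathcal{G}$ of $\mathcal{G}_0$ with parts $X_1,X_2$ such that for every $x\in X_1$ we have $d_{\mathcal{G}}(x)\geq\frac{D_1}{256r^2(\log n)^2}$ and $d_{\mathcal{G}_0}(x)\leq D_1$, and for every $x\in X_2$ we have $d_{\mathcal{G}}(x)\geq\frac{D_2}{256r^2(\log n)^2}$ and $d_{\mathcal{G}_0}(x)\leq D_2$.
   Context: Given a graph $G$ and a positive integer $r$, the auxiliary graph $\mathcal{G}_0$ has as vertex set the family of all $r$-element subsets of $V(G)$, and two such sets $U,W$ are adjacent in $\mathcal{G}_0$ if $U\cap W=\emptyset$ and $uw\in E(G)$ for all $u\in U$, $w\in W$. $d_H(x)$ denotes the degree of $x$ in $H$. Logarithms are base $2$. *)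

theory Defs
  imports Complex_Main
begin

definition simple_graph :: "'a set \<Rightarrow> ('a \<Rightarrow> 'a \<Rightarrow> bool) \<Rightarrow> bool" where
  "simple_graph V E \<longleftrightarrow> finite V \<and> (\<forall>u v. E u v \<longrightarrow> u \<in> V \<and> v \<in> V)
     \<and> (\<forall>u v. E u v \<longrightarrow> E v u) \<and> (\<forall>u. \<not> E u u)"

definition aux_vertices :: "'a set \<Rightarrow> nat \<Rightarrow> 'a set set" where
  "aux_vertices V r = {U. U \<subseteq> V \<and> card U = r}"

definition aux_adj :: "'a set \<Rightarrow> ('a \<Rightarrow> 'a \<Rightarrow> bool) \<Rightarrow> nat \<Rightarrow> 'a set \<Rightarrow> 'a set \<Rightarrow> bool" where
  "aux_adj V E r U W \<longleftrightarrow> U \<in> aux_vertices V r \<and> W \<in> aux_vertices V r \<and>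
     U \<inter> W = {} \<and> (\<forall>u\<in>U. \<forall>w\<in>W. E u w)"

definition deg :: "('b \<Rightarrow> 'b \<Rightarrow> bool) \<Rightarrow> 'b \<Rightarrow> nat" where
  "deg R x = card {y. R x y}"

definition avg_deg :: "'b set \<Rightarrow> ('b \<Rightarrow> 'b \<Rightarrow> bool) \<Rightarrow> real" where
  "avg_deg W R = (\<Sum>x\<in>W. real (deg R x)) / real (card W)"

definition bipartite_subgraph ::
  "'b set \<Rightarrow> ('b \<Rightarrow> 'b \<Rightarrow> bool) \<Rightarrow> 'b set \<Rightarrow> 'b set \<Rightarrow> ('b \<Rightarrow> 'b \<Rightarrow> bool) \<Rightarrow> bool" where
  "bipartite_subgraph W R X1 X2 H \<longleftrightarrow>
     X1 \<subseteq> W \<and> X2 \<subseteq> W \<and> X1 \<inter> X2 = {} \<and>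
     (\<forall>x y. H x y \<longrightarrow> H y x) \<and>
     (\<forall>x y. H x y \<longrightarrow> R x y) \<and>
     (\<forall>x y. H x y \<longrightarrow> (x \<in> X1 \<and> y \<in> X2) \<or> (x \<in> X2 \<and> y \<in> X1))"

end

theory Submission
  imports Defs "HOL-Library.Discrete_Functions"
begin

text \<open>
  Averaging over all cuts, the vertices of degree at least \<open>d/4\<close> contain a cut carrying an
  eighth of all edges. Both sides of this cut split into the \<open>T = O(r log n)\<close> dyadic classes of
  their degrees, and some pair of classes \<open>(i, j)\<close> carries more edges than the total weight of its
  vertices, where a vertex of class \<open>i\<close> has weight \<open>2^i/K\<close> and \<open>K > 8T\<close>. A subpair maximising
  edges minus weight cannot gain by deleting a vertex, so each of its vertices has at least its
  weight as degree; with \<open>D = 2^(i+1)\<close> this weight is \<open>D/(2K)\<close>, while all degrees in the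
  class are below \<open>D\<close>.
\<close>

text \<open>Ordered pairs: \<open>edges R A A\<close> counts every edge inside \<open>A\<close> twice.\<close>

definition edges :: "('b \<Rightarrow> 'b \<Rightarrow> bool) \<Rightarrow> 'b set \<Rightarrow> 'b set \<Rightarrow> real" where
  "edges R A B = (\<Sum>a\<in>A. \<Sum>b\<in>B. of_bool (R a b))"

lemma edges_nonneg: "0 \<le> edges R A B"
  unfolding edges_def by (intro sum_nonneg) auto

lemma sum_of_bool_card_Collect:
  "finite B \<Longrightarrow> (\<Sum>b\<in>B. of_bool (P b)) = real (card {b\<in>B. P b})"
  by (simp add: Int_def)

lemma edges_commute:
  assumes "\<And>x y. R x y \<Longrightarrow> R y x"
  shows "edges R A B = edges R B A"
proof -
  have "R a b = R b a" for a b using assms by blast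
  then show ?thesis unfolding edges_def by (subst sum.swap) simp
qed

lemma edges_Un_left:
  "finite A \<Longrightarrow> finite A' \<Longrightarrow> A \<inter> A' = {} \<Longrightarrow> edges R (A \<union> A') B = edges R A B + edges R A' B"
  unfolding edges_def by (simp add: sum.union_disjoint)

lemma edges_Un_right:
  "finite B \<Longrightarrow> finite B' \<Longrightarrow> B \<inter> B' = {} \<Longrightarrow> edges R A (B \<union> B') = edges R A B + edges R A B'"
  unfolding edges_def by (simp add: sum.union_disjoint sum.distrib del: sum_of_bool_eq)

lemma edges_mono_right: "finite B' \<Longrightarrow> B \<subseteq> B' \<Longrightarrow> edges R A B \<le> edges R A B'"
  unfolding edges_def by (intro sum_mono sum_mono2) auto

lemma edges_remove_left:
  "finite A \<Longrightarrow> x \<in> A \<Longrightarrow> edges R A B = (\<Sum>b\<in>B. of_bool (R x b)) + edges R (A - {x}) B"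
  unfolding edges_def by (simp add: sum.remove)

lemma edges_remove_right:
  "finite B \<Longrightarrow> y \<in> B \<Longrightarrow> edges R A B = (\<Sum>a\<in>A. of_bool (R a y)) + edges R A (B - {y})"
  unfolding edges_def by (simp add: sum.remove sum.distrib del: sum_of_bool_eq)

lemma edges_eq_sum_deg:
  assumes "simple_graph W R"
  shows "edges R A W = (\<Sum>x\<in>A. real (deg R x))"
proof -
  have "{y. R x y} = {y\<in>W. R x y}" for x using assms by (auto simp: simple_graph_def)
  moreover have "finite W" using assms by (simp add: simple_graph_def)
  ultimately show ?thesis
    unfolding edges_def deg_def by (simp add: sum_of_bool_card_Collect del: sum_of_bool_eq)
qed

lemma sum_deg_eq_card_mult_avg_deg:
  "finite W \<Longrightarrow> (\<Sum>x\<in>W. real (deg R x)) = real (card W) * avg_deg W R"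
  unfolding avg_deg_def by (cases "W = {}") auto

lemma card_Pow_separating:
  assumes "finite Y" "a \<in> Y" "b \<in> Y" "a \<noteq> b"
  shows "card {P\<in>Pow Y. a \<in> P \<and> b \<notin> P} = 2 ^ (card Y - 2)"
proof -
  have "bij_betw (insert a) (Pow (Y - {a, b})) {P\<in>Pow Y. a \<in> P \<and> b \<notin> P}"
    by (rule bij_betw_byWitness[where f' = "\<lambda>P. P - {a}"]) (use assms in auto)
  then have "card {P\<in>Pow Y. a \<in> P \<and> b \<notin> P} = card (Pow (Y - {a, b}))"
    by (simp add: bij_betw_same_card)
  also have "\<dots> = 2 ^ (card Y - 2)"
    using assms by (simp add: card_Pow card_Diff_subset)
  finally show ?thesis .
qed

lemma edges_cut_as_double_sum:
  assumes "finite Y" "P \<subseteq> Y"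
  shows "edges R P (Y - P) = (\<Sum>a\<in>Y. \<Sum>b\<in>Y. of_bool (a \<in> P \<and> b \<notin> P \<and> R a b))"
proof -
  have "(\<Sum>a\<in>Y. \<Sum>b\<in>Y. of_bool (a \<in> P \<and> b \<notin> P \<and> R a b))
      = (\<Sum>a\<in>Y. if a \<in> P then \<Sum>b\<in>Y. if b \<notin> P then of_bool (R a b) else 0 else 0)"
    by (intro sum.cong refl) (auto simp del: sum_of_bool_eq intro: sum.cong)
  also have "\<dots> = (\<Sum>a\<in>{a\<in>Y. a \<in> P}. \<Sum>b\<in>{b\<in>Y. b \<notin> P}. of_bool (R a b))"
    using assms(1) by (simp only: sum.inter_filter)
  also have "\<dots> = edges R P (Y - P)"
    unfolding edges_def using assms(2) by (intro sum.cong) auto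
  finally show ?thesis ..
qed

lemma sum_edges_cuts:
  assumes fin: "finite Y" and irrefl: "\<And>x. \<not> R x x"
  shows "(\<Sum>P\<in>Pow Y. edges R P (Y - P)) = 2 ^ (card Y - 2) * edges R Y Y"
proof -
  have pair: "(\<Sum>P\<in>Pow Y. of_bool (a \<in> P \<and> b \<notin> P \<and> R a b))
      = (2::real) ^ (card Y - 2) * of_bool (R a b)"
    if "a \<in> Y" "b \<in> Y" for a b
  proof (cases "a \<noteq> b \<and> R a b")
    case True
    then have "Pow Y \<inter> {P. a \<in> P \<and> b \<notin> P \<and> R a b} = {P\<in>Pow Y. a \<in> P \<and> b \<notin> P}" by auto
    then show ?thesis using True that fin card_Pow_separating[OF fin that] by simp
  qed (use irrefl in auto)
  have "(\<Sum>P\<in>Pow Y. edges R P (Y - P))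
      = (\<Sum>P\<in>Pow Y. \<Sum>a\<in>Y. \<Sum>b\<in>Y. of_bool (a \<in> P \<and> b \<notin> P \<and> R a b))"
    using fin by (intro sum.cong refl edges_cut_as_double_sum) auto
  also have "\<dots> = (\<Sum>a\<in>Y. \<Sum>b\<in>Y. \<Sum>P\<in>Pow Y. of_bool (a \<in> P \<and> b \<notin> P \<and> R a b))"
    by (subst sum.swap, rule sum.cong[OF refl], rule sum.swap)
  also have "\<dots> = 2 ^ (card Y - 2) * edges R Y Y"
    unfolding edges_def using pair by (simp add: sum_distrib_left)
  finally show ?thesis .
qed

lemma exists_large_cut:
  assumes "finite Y" "\<And>x. \<not> R x x"
  shows "\<exists>P\<subseteq>Y. edges R Y Y \<le> 4 * edges R P (Y - P)"
proof (rule ccontr)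
  assume "\<not> ?thesis"
  then have small: "edges R P (Y - P) < edges R Y Y / 4" if "P \<in> Pow Y" for P
    using that by force
  have "(\<Sum>P\<in>Pow Y. edges R P (Y - P)) < (\<Sum>P\<in>Pow Y. edges R Y Y / 4)"
    using assms(1) by (intro sum_strict_mono small) auto
  also have "\<dots> = 2 ^ card Y / 4 * edges R Y Y"
    using assms(1) by (simp add: card_Pow)
  also have "\<dots> \<le> 2 ^ (card Y - 2) * edges R Y Y"
  proof (intro mult_right_mono edges_nonneg)
    show "(2::real) ^ card Y / 4 \<le> 2 ^ (card Y - 2)"
    proof (cases "2 \<le> card Y")
      case True
      then obtain k where "card Y = k + 2" by (metis le_add_diff_inverse2)
      then show ?thesis by (simp add: power_add)
    next
      case False
      then have "(2::real) ^ card Y \<le> 2 ^ 1" by (intro power_increasing) auto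
      then show ?thesis using False by simp
    qed
  qed
  finally show False using sum_edges_cuts[OF assms(1), of R] assms(2) by simp
qed

lemma exists_subpair_with_min_degrees:
  fixes w :: "'b \<Rightarrow> real"
  assumes fin: "finite P" "finite Q" and sym: "\<And>x y. R x y \<Longrightarrow> R y x"
    and w_nonneg: "\<And>x. 0 \<le> w x" and dense: "sum w P + sum w Q < edges R P Q"
  shows "\<exists>A\<subseteq>P. \<exists>B\<subseteq>Q. A \<noteq> {} \<and>
           (\<forall>x\<in>A. w x \<le> card {y\<in>B. R x y}) \<and> (\<forall>y\<in>B. w y \<le> card {x\<in>A. R y x})"
proof -
  define slack where "slack = (\<lambda>(A, B). edges R A B - sum w A - sum w B)"
  define F where "F = Pow P \<times> Pow Q"
  have "finite F" "(P, Q) \<in> F" using fin by (auto simp: F_def)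
  then have "Max (slack ` F) \<in> slack ` F" by (intro Max_in) auto
  then obtain A B where "(A, B) \<in> F" "slack (A, B) = Max (slack ` F)" by auto
  then have AB: "(A, B) \<in> F" and max: "\<And>z. z \<in> F \<Longrightarrow> slack z \<le> slack (A, B)"
    using \<open>finite F\<close> by auto
  have sub: "A \<subseteq> P" "B \<subseteq> Q" and finAB: "finite A" "finite B"
    using AB fin by (auto simp: F_def intro: finite_subset)
  have "0 < slack (A, B)" using max[OF \<open>(P, Q) \<in> F\<close>] dense by (simp add: slack_def)
  then have "A \<noteq> {}" using sum_nonneg[of B w] w_nonneg by (auto simp: slack_def edges_def)
  moreover have "w x \<le> card {y\<in>B. R x y}" if "x \<in> A" for x
  proof -
    have "slack (A - {x}, B) \<le> slack (A, B)" using max[of "(A - {x}, B)"] sub by (auto simp: F_def)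
    then show ?thesis using that finAB edges_remove_left[of A x R B] sum.remove[of A x w]
      by (simp add: slack_def sum_of_bool_card_Collect del: sum_of_bool_eq)
  qed
  moreover have "w y \<le> card {x\<in>A. R y x}" if "y \<in> B" for y
  proof -
    have "slack (A, B - {y}) \<le> slack (A, B)" using max[of "(A, B - {y})"] sub by (auto simp: F_def)
    moreover have "R a y = R y a" for a using sym by blast
    ultimately show ?thesis using that finAB edges_remove_right[of B y R A] sum.remove[of B y w]
      by (simp add: slack_def sum_of_bool_card_Collect del: sum_of_bool_eq)
  qed
  ultimately show ?thesis using sub by blast
qed

lemma exists_class_pair_with_positive_slack:
  fixes w :: "'b \<Rightarrow> real" and cl :: "'b \<Rightarrow> nat"
  assumes fin: "finite P" "finite Q" and cl_less: "\<And>x. x \<in> P \<union> Q \<Longrightarrow> cl x < T"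
    and dense: "real T * (sum w P + sum w Q) < edges R P Q"
  shows "\<exists>i<T. \<exists>j<T. sum w {x\<in>P. cl x = i} + sum w {y\<in>Q. cl y = j}
                      < edges R {x\<in>P. cl x = i} {y\<in>Q. cl y = j}"
proof (rule ccontr)
  assume "\<not> ?thesis"
  then have "(\<Sum>i<T. \<Sum>j<T. edges R {x\<in>P. cl x = i} {y\<in>Q. cl y = j})
      \<le> (\<Sum>i<T. \<Sum>j<T. sum w {x\<in>P. cl x = i} + sum w {y\<in>Q. cl y = j})"
    by (intro sum_mono) (meson lessThan_iff not_less)
  moreover have "(\<Sum>i<T. \<Sum>j<T. edges R {x\<in>P. cl x = i} {y\<in>Q. cl y = j}) = edges R P Q"
  proof -
    have "(\<Sum>j<T. edges R A {y\<in>Q. cl y = j}) = edges R A Q" for A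
      unfolding edges_def using fin cl_less by (subst sum.swap) (intro sum.cong refl sum.group; auto)
    moreover have "(\<Sum>i<T. edges R {x\<in>P. cl x = i} Q) = edges R P Q"
      unfolding edges_def using fin cl_less by (intro sum.group) auto
    ultimately show ?thesis by simp
  qed
  moreover have "(\<Sum>i<T. \<Sum>j<T. sum w {x\<in>P. cl x = i} + sum w {y\<in>Q. cl y = j})
      = real T * (sum w P + sum w Q)"
  proof -
    have "(\<Sum>i<T. sum w {x\<in>P. cl x = i}) = sum w P" "(\<Sum>j<T. sum w {y\<in>Q. cl y = j}) = sum w Q"
      using fin cl_less by (intro sum.group; auto)+
    then show ?thesis by (simp add: sum.distrib distrib_left flip: sum_distrib_left)
  qed
  ultimately show False using dense by linarith
qed

lemma exists_dyadic_subpair: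
  fixes K :: real
  assumes sym: "\<And>x y. R x y \<Longrightarrow> R y x" and fin: "finite P" "finite Q" and "0 < K"
    and deg_pos: "\<And>x. x \<in> P \<union> Q \<Longrightarrow> 0 < deg R x"
    and deg_less: "\<And>x. x \<in> P \<union> Q \<Longrightarrow> deg R x < 2 ^ T"
    and dense: "real T * ((\<Sum>x\<in>P. real (deg R x)) + (\<Sum>x\<in>Q. real (deg R x))) < K * edges R P Q"
  shows "\<exists>i j. \<exists>A\<subseteq>P. \<exists>B\<subseteq>Q. A \<noteq> {} \<and>
           (\<forall>x\<in>A. real (deg R x) < 2 ^ (i + 1) \<and> 2 ^ i / K \<le> card {y\<in>B. R x y}) \<and>
           (\<forall>y\<in>B. real (deg R y) < 2 ^ (j + 1) \<and> 2 ^ j / K \<le> card {x\<in>A. R y x})"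
proof -
  define cl where "cl x = floor_log (deg R x)" for x
  define w where "w x = 2 ^ cl x / K" for x
  have cl_less: "cl x < T" if "x \<in> P \<union> Q" for x
    using le_less_trans[OF floor_log_exp2_le[OF deg_pos[OF that]] deg_less[OF that]]
    by (simp add: cl_def)
  have w_le: "w x \<le> real (deg R x) / K" if "x \<in> P \<union> Q" for x
    using floor_log_exp2_le[OF deg_pos[OF that]] \<open>0 < K\<close>
    by (simp add: w_def cl_def divide_right_mono flip: of_nat_le_iff)
  have "sum w P + sum w Q \<le> (\<Sum>x\<in>P. real (deg R x) / K) + (\<Sum>x\<in>Q. real (deg R x) / K)"
    using w_le by (intro add_mono sum_mono) auto
  then have "real T * (sum w P + sum w Q)
      \<le> real T * ((\<Sum>x\<in>P. real (deg R x) / K) + (\<Sum>x\<in>Q. real (deg R x) / K))"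
    by (rule mult_left_mono) simp
  also have "\<dots> = real T * ((\<Sum>x\<in>P. real (deg R x)) + (\<Sum>x\<in>Q. real (deg R x))) / K"
    by (simp add: sum_divide_distrib[symmetric] add_divide_distrib[symmetric])
  also have "\<dots> < edges R P Q" using dense \<open>0 < K\<close> by (simp add: divide_less_eq mult.commute)
  finally obtain i j where slack: "sum w {x\<in>P. cl x = i} + sum w {y\<in>Q. cl y = j}
      < edges R {x\<in>P. cl x = i} {y\<in>Q. cl y = j}"
    using exists_class_pair_with_positive_slack[OF fin, of cl T w R] cl_less by blast
  have "finite {x\<in>P. cl x = i}" "finite {y\<in>Q. cl y = j}" using fin by simp_all
  moreover have "0 \<le> w x" for x using \<open>0 < K\<close> by (simp add: w_def)
  ultimately obtain A B where AB: "A \<subseteq> {x\<in>P. cl x = i}" "B \<subseteq> {y\<in>Q. cl y = j}" "A \<noteq> {}"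
    and minA: "\<forall>x\<in>A. w x \<le> card {y\<in>B. R x y}" and minB: "\<forall>y\<in>B. w y \<le> card {x\<in>A. R y x}"
    using exists_subpair_with_min_degrees[OF _ _ sym _ slack] by blast
  have "deg R x < 2 ^ (cl x + 1)" for x
    using floor_log_exp2_gt[of "deg R x"] by (simp add: cl_def)
  then have deg_less_class: "real (deg R x) < 2 ^ (cl x + 1)" for x
    by (simp only: of_nat_less_numeral_power_cancel_iff)
  have "real (deg R x) < 2 ^ (i + 1) \<and> 2 ^ i / K \<le> card {y\<in>B. R x y}" if "x \<in> A" for x
  proof -
    have "cl x = i" using AB(1) that by blast
    then show ?thesis using minA[rule_format, OF that] deg_less_class[of x] by (simp add: w_def)
  qed
  moreover have "real (deg R y) < 2 ^ (j + 1) \<and> 2 ^ j / K \<le> card {x\<in>A. R y x}" if "y \<in> B" for y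
  proof -
    have "cl y = j" using AB(2) that by blast
    then show ?thesis using minB[rule_format, OF that] deg_less_class[of y] by (simp add: w_def)
  qed
  moreover have "A \<subseteq> P" "B \<subseteq> Q" using AB by auto
  ultimately show ?thesis using \<open>A \<noteq> {}\<close> by blast
qed

lemma exists_dense_cut_of_high_degree_vertices:
  assumes G: "simple_graph W R"
  shows "\<exists>P Q. P \<inter> Q = {} \<and> P \<union> Q \<subseteq> {x\<in>W. avg_deg W R / 4 \<le> deg R x} \<and>
           edges R W W \<le> 8 * edges R P Q"
proof -
  define d where "d = avg_deg W R"
  define Y where "Y = {x\<in>W. d / 4 \<le> deg R x}"
  define Z where "Z = W - Y"
  have fin: "finite W" "finite Y" "finite Z"
    using G by (auto simp: simple_graph_def Y_def Z_def)
  have WYZ: "W = Y \<union> Z" "Y \<inter> Z = {}" "Z \<subseteq> W" by (auto simp: Y_def Z_def)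
  have "0 \<le> d" unfolding d_def avg_deg_def by (simp add: sum_nonneg)
  have "edges R Z W = (\<Sum>x\<in>Z. real (deg R x))" using edges_eq_sum_deg[OF G] .
  also have "\<dots> \<le> (\<Sum>x\<in>Z. d / 4)" by (intro sum_mono) (auto simp: Z_def Y_def)
  also have "\<dots> = real (card Z) * (d / 4)" by simp
  also have "\<dots> \<le> real (card W) * (d / 4)"
    using card_mono[OF fin(1) WYZ(3)] \<open>0 \<le> d\<close> by (intro mult_right_mono) auto
  also have "\<dots> = edges R W W / 4"
    using edges_eq_sum_deg[OF G] sum_deg_eq_card_mult_avg_deg[OF fin(1)] by (simp add: d_def)
  finally have low: "edges R Z W \<le> edges R W W / 4" .
  have "edges R W W = edges R Y Y + edges R Z Y + edges R Z W"
    using edges_Un_left[OF fin(2,3) WYZ(2)] edges_Un_right[OF fin(2,3) WYZ(2)]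
      edges_commute[of R Y Z] G WYZ(1) by (simp add: simple_graph_def)
  moreover have "edges R Z Y \<le> edges R Z W"
    using WYZ by (intro edges_mono_right fin) auto
  ultimately have "edges R W W \<le> 2 * edges R Y Y" using low by linarith
  moreover have "\<not> R x x" for x using G by (simp add: simple_graph_def)
  then obtain P where "P \<subseteq> Y" "edges R Y Y \<le> 4 * edges R P (Y - P)"
    using exists_large_cut[OF fin(2)] by blast
  ultimately have "P \<inter> (Y - P) = {} \<and> P \<union> (Y - P) \<subseteq> Y \<and> edges R W W \<le> 8 * edges R P (Y - P)"
    by auto
  then show ?thesis unfolding Y_def d_def by blast
qed

lemma sum_deg_le_edges:
  assumes G: "simple_graph W R" and "P \<inter> Q = {}" "P \<union> Q \<subseteq> W"
  shows "(\<Sum>x\<in>P. real (deg R x)) + (\<Sum>x\<in>Q. real (deg R x)) \<le> edges R W W"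
proof -
  have "finite W" using G by (simp add: simple_graph_def)
  then have "finite P" "finite Q" using assms(3) by (auto intro: finite_subset)
  then have "(\<Sum>x\<in>P. real (deg R x)) + (\<Sum>x\<in>Q. real (deg R x)) = (\<Sum>x\<in>P \<union> Q. real (deg R x))"
    using assms(2) by (simp add: sum.union_disjoint)
  also have "\<dots> \<le> edges R W W"
    using assms(3) \<open>finite W\<close> by (auto simp: edges_eq_sum_deg[OF G] intro!: sum_mono2)
  finally show ?thesis .
qed

definition between :: "('b \<Rightarrow> 'b \<Rightarrow> bool) \<Rightarrow> 'b set \<Rightarrow> 'b set \<Rightarrow> 'b \<Rightarrow> 'b \<Rightarrow> bool" where
  "between R A B x y \<longleftrightarrow> R x y \<and> (x \<in> A \<and> y \<in> B \<or> x \<in> B \<and> y \<in> A)"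

lemma bipartite_subgraph_between:
  assumes "simple_graph W R" "A \<subseteq> W" "B \<subseteq> W" "A \<inter> B = {}"
  shows "bipartite_subgraph W R A B (between R A B)"
  using assms by (auto simp: bipartite_subgraph_def between_def simple_graph_def)

lemma deg_between_left: "A \<inter> B = {} \<Longrightarrow> x \<in> A \<Longrightarrow> deg (between R A B) x = card {y\<in>B. R x y}"
  unfolding deg_def between_def by (metis (lifting) disjoint_iff)

lemma deg_between_right: "A \<inter> B = {} \<Longrightarrow> x \<in> B \<Longrightarrow> deg (between R A B) x = card {y\<in>A. R x y}"
  unfolding deg_def between_def by (metis (lifting) disjoint_iff)

lemma exists_bipartite_subgraph_with_dyadic_degrees:
  fixes K :: real
  assumes G: "simple_graph W R" and d_pos: "0 < avg_deg W R"
    and deg_less: "\<And>x. x \<in> W \<Longrightarrow> deg R x < 2 ^ T" and KT: "8 * real T < K"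
  shows "\<exists>D1 D2 X1 X2 H. avg_deg W R / 4 \<le> D1 \<and> avg_deg W R / 4 \<le> D2 \<and>
           bipartite_subgraph W R X1 X2 H \<and> X1 \<union> X2 \<noteq> {} \<and>
           (\<forall>x\<in>X1. D1 / (2 * K) \<le> real (deg H x) \<and> real (deg R x) \<le> D1) \<and>
           (\<forall>x\<in>X2. D2 / (2 * K) \<le> real (deg H x) \<and> real (deg R x) \<le> D2)"
proof -
  define d where "d = avg_deg W R"
  have fin: "finite W" and sym: "\<And>x y. R x y \<Longrightarrow> R y x"
    using G by (auto simp: simple_graph_def)
  obtain P Q where PQ: "P \<inter> Q = {}" "P \<union> Q \<subseteq> {x\<in>W. d / 4 \<le> deg R x}"
    and cut: "edges R W W \<le> 8 * edges R P Q"
    using exists_dense_cut_of_high_degree_vertices[OF G] unfolding d_def by blast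
  have finPQ: "finite P" "finite Q" using PQ fin by (auto intro: finite_subset)
  have "0 < K" using KT by linarith
  have "0 < edges R W W"
    using d_pos edges_eq_sum_deg[OF G] by (simp add: avg_deg_def zero_less_divide_iff)
  have "(\<Sum>x\<in>P. real (deg R x)) + (\<Sum>x\<in>Q. real (deg R x)) \<le> edges R W W"
    using sum_deg_le_edges[OF G PQ(1)] PQ(2) by blast
  then have "real T * ((\<Sum>x\<in>P. real (deg R x)) + (\<Sum>x\<in>Q. real (deg R x)))
      \<le> real T * edges R W W"
    by (rule mult_left_mono) simp
  also have "\<dots> < K / 8 * edges R W W"
    using KT \<open>0 < edges R W W\<close> by (intro mult_strict_right_mono) auto
  also have "\<dots> \<le> K * edges R P Q"
    using mult_left_mono[OF cut, of "K / 8"] \<open>0 < K\<close> by simp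
  finally have dense:
    "real T * ((\<Sum>x\<in>P. real (deg R x)) + (\<Sum>x\<in>Q. real (deg R x))) < K * edges R P Q" .
  have high: "d / 4 \<le> deg R x" "0 < deg R x" "deg R x < 2 ^ T" if "x \<in> P \<union> Q" for x
    using that PQ(2) d_pos deg_less unfolding d_def by force+
  obtain i j A B where AB: "A \<subseteq> P" "B \<subseteq> Q" "A \<noteq> {}"
    and degA: "\<forall>x\<in>A. real (deg R x) < 2 ^ (i + 1) \<and> 2 ^ i / K \<le> card {y\<in>B. R x y}"
    and degB: "\<forall>y\<in>B. real (deg R y) < 2 ^ (j + 1) \<and> 2 ^ j / K \<le> card {x\<in>A. R y x}"
    using exists_dyadic_subpair[OF sym finPQ \<open>0 < K\<close> high(2,3) dense] by blast
  obtain a where "a \<in> A" using AB by auto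
  then have a: "real (deg R a) < 2 ^ (i + 1)" "2 ^ i / K \<le> card {y\<in>B. R a y}" "d / 4 \<le> deg R a"
    using degA high(1) AB(1) by auto
  moreover have "0 < (2::real) ^ i / K" using \<open>0 < K\<close> by simp
  ultimately obtain b where "b \<in> B" by (cases "B = {}") auto
  then have b: "real (deg R b) < 2 ^ (j + 1)" "d / 4 \<le> deg R b"
    using degB high(1) AB(2) by auto
  have D_ge: "d / 4 \<le> 2 ^ (i + 1)" "d / 4 \<le> 2 ^ (j + 1)" using a(1,3) b by linarith+
  have disj: "A \<inter> B = {}" using AB PQ by blast
  have "bipartite_subgraph W R A B (between R A B)"
    using bipartite_subgraph_between[OF G _ _ disj] AB PQ by blast
  moreover have "\<forall>x\<in>A. 2 ^ (i + 1) / (2 * K) \<le> real (deg (between R A B) x) \<and>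
                         real (deg R x) \<le> 2 ^ (i + 1)"
    using degA deg_between_left[OF disj] by (simp add: less_imp_le)
  moreover have "\<forall>x\<in>B. 2 ^ (j + 1) / (2 * K) \<le> real (deg (between R A B) x) \<and>
                         real (deg R x) \<le> 2 ^ (j + 1)"
    using degB deg_between_right[OF disj] by (simp add: less_imp_le)
  ultimately show ?thesis using D_ge \<open>A \<noteq> {}\<close> unfolding d_def by blast
qed

lemma simple_graph_aux_adj:
  assumes "simple_graph V E" "0 < r"
  shows "simple_graph (aux_vertices V r) (aux_adj V E r)"
proof -
  have "finite (aux_vertices V r)"
    using assms(1) by (auto simp: simple_graph_def aux_vertices_def intro: finite_subset[of _ "Pow V"])
  moreover have "\<not> aux_adj V E r U U" for U
    using assms(2) by (auto simp: aux_adj_def aux_vertices_def)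
  ultimately show ?thesis using assms(1) unfolding simple_graph_def aux_adj_def by blast
qed

lemma deg_less_card:
  assumes "simple_graph W R" "x \<in> W"
  shows "deg R x < card W"
proof -
  have "{y. R x y} \<subseteq> W - {x}" using assms by (auto simp: simple_graph_def)
  then have "deg R x \<le> card (W - {x})"
    using assms unfolding deg_def simple_graph_def by (intro card_mono) auto
  also have "\<dots> < card W"
    using assms by (intro card_Diff1_less) (auto simp: simple_graph_def)
  finally show ?thesis .
qed

lemma card_aux_vertices: "finite V \<Longrightarrow> card (aux_vertices V r) = card V choose r"
  unfolding aux_vertices_def by (rule n_subsets)

lemma ex_edge_if_avg_deg_pos:
  assumes "0 < avg_deg W R"
  shows "\<exists>x y. R x y"
proof (rule ccontr)
  assume "\<not> ?thesis"
  then have "deg R x = 0" for x by (simp add: deg_def)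
  then show False using assms by (simp add: avg_deg_def)
qed

lemma double_le_card_if_aux_adj:
  assumes "finite V" "aux_adj V E r U U'"
  shows "2 * r \<le> card V"
proof -
  have sub: "U \<subseteq> V" "U' \<subseteq> V" and "card U = r" "card U' = r" "U \<inter> U' = {}"
    using assms(2) by (auto simp: aux_adj_def aux_vertices_def)
  then have "card (U \<union> U') = 2 * r"
    using assms(1) by (simp add: card_Un_disjoint finite_subset)
  then show ?thesis using card_mono[OF assms(1), of "U \<union> U'"] sub by simp
qed

lemma deg_aux_adj_less:
  assumes "simple_graph V E" "0 < r" "r \<le> card V" "U \<in> aux_vertices V r"
  shows "deg (aux_adj V E r) U < 2 ^ (r * Suc (floor_log (card V)))"
proof -
  have "finite V" using assms(1) by (simp add: simple_graph_def)
  then have "deg (aux_adj V E r) U < card V choose r"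
    using deg_less_card[OF simple_graph_aux_adj[OF assms(1,2)] assms(4)] by (simp add: card_aux_vertices)
  also have "\<dots> \<le> card V ^ r" using assms(3) by (rule binomial_le_pow)
  also have "\<dots> \<le> (2 ^ Suc (floor_log (card V))) ^ r"
    using floor_log_exp2_gt[of "card V"] by (intro power_mono) auto
  also have "\<dots> = 2 ^ (r * Suc (floor_log (card V)))" by (metis mult.commute power_mult)
  finally show ?thesis .
qed

lemma eight_mult_Suc_floor_log_less:
  fixes r n :: nat
  assumes "1 \<le> r" "2 \<le> n"
  shows "8 * real (r * Suc (floor_log n)) < 128 * real r ^ 2 * (log 2 (real n))\<^sup>2"
proof -
  define L where "L = log 2 (real n)"
  have "1 \<le> L" using assms(2) by (simp add: L_def)
  moreover have "real (floor_log n) \<le> L" using assms(2) \<open>1 \<le> L\<close> by (simp add: floor_log_altdef L_def)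
  ultimately have "real (Suc (floor_log n)) \<le> 2 * L" by simp
  then have "real (r * Suc (floor_log n)) \<le> real r * (2 * L)"
    unfolding of_nat_mult by (rule mult_left_mono) simp
  moreover have "1 \<le> real r" using assms(1) by simp
  then have "1 \<le> real r * L" using mult_mono[OF _ \<open>1 \<le> L\<close>] by simp
  then have "real r * L \<le> (real r * L)\<^sup>2"
    using mult_left_mono[of 1 "real r * L" "real r * L"] by (simp add: power2_eq_square)
  then have "16 * (real r * L) < 128 * (real r * L)\<^sup>2" using \<open>1 \<le> real r * L\<close> by linarith
  ultimately show ?thesis by (simp add: L_def power_mult_distrib)
qed

theorem lemma5p4:
  fixes V :: "'a set" and E :: "'a \<Rightarrow> 'a \<Rightarrow> bool" and r n :: nat and d :: real
  assumes "simple_graph V E" and "card V = n" and "r > 0"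
    and "d = avg_deg (aux_vertices V r) (aux_adj V E r)" and "d > 0"
  shows "\<exists>D1 D2 X1 X2 H. D1 \<ge> d / 4 \<and> D2 \<ge> d / 4 \<and>
     bipartite_subgraph (aux_vertices V r) (aux_adj V E r) X1 X2 H \<and>
     X1 \<union> X2 \<noteq> {} \<and>
     (\<forall>x\<in>X1. real (deg H x) \<ge> D1 / (256 * real r ^ 2 * (log 2 (real n))^2) \<and>
              real (deg (aux_adj V E r) x) \<le> D1) \<and>
     (\<forall>x\<in>X2. real (deg H x) \<ge> D2 / (256 * real r ^ 2 * (log 2 (real n))^2) \<and>
              real (deg (aux_adj V E r) x) \<le> D2)"
proof -
  define T where "T = r * Suc (floor_log n)"
  define K where "K = 128 * real r ^ 2 * (log 2 (real n))\<^sup>2"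
  have G: "simple_graph (aux_vertices V r) (aux_adj V E r)"
    using simple_graph_aux_adj assms(1,3) .
  obtain U U' where "aux_adj V E r U U'" using ex_edge_if_avg_deg_pos assms(4,5) by blast
  then have "2 * r \<le> n" using double_le_card_if_aux_adj assms(1,2) by (auto simp: simple_graph_def)
  then have "r \<le> n" "2 \<le> n" using assms(3) by linarith+
  then have deg_less: "\<And>U. U \<in> aux_vertices V r \<Longrightarrow> deg (aux_adj V E r) U < 2 ^ T"
    and KT: "8 * real T < K"
    using deg_aux_adj_less[OF assms(1,3)] eight_mult_Suc_floor_log_less assms(2,3)
    by (auto simp: T_def K_def)
  have den: "256 * real r ^ 2 * (log 2 (real n))\<^sup>2 = 2 * K" by (simp add: K_def)
  show ?thesis
    unfolding assms(4) den
    by (rule exists_bipartite_subgraph_with_dyadic_degrees[OF G _ deg_less KT]) (use assms(4,5) in simp)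
qed

end
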